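(* Let $G$ be a linear system with generalized state-space realization $\dot{x}=Ax+\hat{A}w+Bu$, $w=\bar{A}x+\tilde{A}w+\bar{B}u$, $y=Cx+\bar{C}w+Du$ (with $I-\tilde{A}$ invertible) and complete computational structure $\mathcal{C}$. Then the subsystem structure $\mathcal{S}$ of $G$ is unique; equivalently, there is a unique admissible partition of the vertex set $V(\mathcal{C})$ of maximal cardinality.
   Context: Here $u\in\mathbb{R}^m$ are inputs, $x\in\mathbb{R}^n$ states, $w\in\mathbb{R}^l$ auxiliary variables, $y\in\mathbb{R}^p$ outputs. The complete computational structure $\mathcal{C}$ is the directed graph with one vertex for each input $u_i$, each state (vertex $f_j$, producing $x_j$), each auxiliary variable (vertex $g_k$, producing $w_k$) and each output (vertex $h_r$, producing $y_r$); there is an edge from vertex $a$ to vertex $b$, labelled by the variable produced by $a$, whenever the function defining the variable associated with $b$ depends on the variable produced by $a$ (for linear equations: the corresponding coefficient is nonzero). Inputs and outputs are manifest variables; states are hidden; an auxiliary variable is hidden unless it is manifest, i.e. passed directly out as an output (e.g. $y_r=w_k$). A partition of $V(\mathcal{C})$ is admissible if every edge of $\mathcal{C}$ between distinct components of the partition represents a manifest (not hidden) variable. The subsystem structure $\mathcal{S}$ is the condensation graph of $\mathcal{C}$ whose vertices $S_1,\dots,S_q$ are the components of an admissible partition of $V(\mathcal{C})$ of maximal cardinality, with an edge $(S_i,S_j)$ whenever $\mathcal{C}$ has an edge from some vertex of $S_i$ to some vertex of $S_j$; vertices are labelled by the transfer function of the associated subsystem and edges by the associated variable. *)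

theory Defs
  imports "Jordan_Normal_Form.Matrix" "HOL-Library.Disjoint_Sets"
begin

text \<open>Vertices of the complete computational structure: one per input u_i,
  state (vertex f_j), auxiliary variable (vertex g_k) and output (vertex h_r).\<close>
datatype vtx = Inp nat | St nat | Aux nat | Out nat

definition ccs_vertices :: "nat \<Rightarrow> nat \<Rightarrow> nat \<Rightarrow> nat \<Rightarrow> vtx set" where
  "ccs_vertices m n l p = Inp ` {..<m} \<union> St ` {..<n} \<union> Aux ` {..<l} \<union> Out ` {..<p}"

text \<open>An edge a -> b exists iff the equation defining the variable of b has a nonzero
  coefficient at the variable produced by a.\<close>
fun ccs_edge :: "real mat \<Rightarrow> real mat \<Rightarrow> real mat \<Rightarrow> real mat \<Rightarrow> real mat \<Rightarrow> real mat
    \<Rightarrow> real mat \<Rightarrow> real mat \<Rightarrow> real mat \<Rightarrow> vtx \<Rightarrow> vtx \<Rightarrow> bool" where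
  "ccs_edge A Ahat B Abar Atilde Bbar C Cbar D (Inp i) (St j) =
     (i < dim_col B \<and> j < dim_row B \<and> B $$ (j, i) \<noteq> 0)"
| "ccs_edge A Ahat B Abar Atilde Bbar C Cbar D (Inp i) (Aux k) =
     (i < dim_col Bbar \<and> k < dim_row Bbar \<and> Bbar $$ (k, i) \<noteq> 0)"
| "ccs_edge A Ahat B Abar Atilde Bbar C Cbar D (Inp i) (Out r) =
     (i < dim_col D \<and> r < dim_row D \<and> D $$ (r, i) \<noteq> 0)"
| "ccs_edge A Ahat B Abar Atilde Bbar C Cbar D (St j) (St j') =
     (j < dim_col A \<and> j' < dim_row A \<and> A $$ (j', j) \<noteq> 0)"
| "ccs_edge A Ahat B Abar Atilde Bbar C Cbar D (St j) (Aux k) =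
     (j < dim_col Abar \<and> k < dim_row Abar \<and> Abar $$ (k, j) \<noteq> 0)"
| "ccs_edge A Ahat B Abar Atilde Bbar C Cbar D (St j) (Out r) =
     (j < dim_col C \<and> r < dim_row C \<and> C $$ (r, j) \<noteq> 0)"
| "ccs_edge A Ahat B Abar Atilde Bbar C Cbar D (Aux k) (St j) =
     (k < dim_col Ahat \<and> j < dim_row Ahat \<and> Ahat $$ (j, k) \<noteq> 0)"
| "ccs_edge A Ahat B Abar Atilde Bbar C Cbar D (Aux k) (Aux k') =
     (k < dim_col Atilde \<and> k' < dim_row Atilde \<and> Atilde $$ (k', k) \<noteq> 0)"
| "ccs_edge A Ahat B Abar Atilde Bbar C Cbar D (Aux k) (Out r) =
     (k < dim_col Cbar \<and> r < dim_row Cbar \<and> Cbar $$ (r, k) \<noteq> 0)"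
| "ccs_edge A Ahat B Abar Atilde Bbar C Cbar D _ _ = False"

text \<open>Auxiliary variable w_k is manifest iff some output equation reads y_r = w_k.\<close>
definition manifest_aux :: "real mat \<Rightarrow> real mat \<Rightarrow> real mat \<Rightarrow> nat \<Rightarrow> bool" where
  "manifest_aux C Cbar D k =
     (\<exists>r < dim_row Cbar.
        (\<forall>j < dim_col C. C $$ (r, j) = 0) \<and>
        (\<forall>k' < dim_col Cbar. Cbar $$ (r, k') = (if k' = k then 1 else 0)) \<and>
        (\<forall>i < dim_col D. D $$ (r, i) = 0))"

text \<open>Whether the variable produced by a vertex (the label of its out-edges) is hidden:
  states are hidden, auxiliary variables are hidden unless manifest, inputs and
  outputs are manifest.\<close>
fun hidden_var :: "real mat \<Rightarrow> real mat \<Rightarrow> real mat \<Rightarrow> vtx \<Rightarrow> bool" where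
  "hidden_var C Cbar D (Inp i) = False"
| "hidden_var C Cbar D (St j) = True"
| "hidden_var C Cbar D (Aux k) = (\<not> manifest_aux C Cbar D k)"
| "hidden_var C Cbar D (Out r) = False"

definition admissible_partition ::
  "vtx set \<Rightarrow> (vtx \<Rightarrow> vtx \<Rightarrow> bool) \<Rightarrow> (vtx \<Rightarrow> bool) \<Rightarrow> vtx set set \<Rightarrow> bool" where
  "admissible_partition V E hid P =
     (partition_on V P \<and>
      (\<forall>a b S T. E a b \<longrightarrow> S \<in> P \<longrightarrow> T \<in> P \<longrightarrow> a \<in> S \<longrightarrow> b \<in> T \<longrightarrow> S \<noteq> T \<longrightarrow> \<not> hid a))"

definition max_admissible_partition ::
  "vtx set \<Rightarrow> (vtx \<Rightarrow> vtx \<Rightarrow> bool) \<Rightarrow> (vtx \<Rightarrow> bool) \<Rightarrow> vtx set set \<Rightarrow> bool" where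
  "max_admissible_partition V E hid P =
     (admissible_partition V E hid P \<and>
      (\<forall>Q. admissible_partition V E hid Q \<longrightarrow> card Q \<le> card P))"

end

theory Submission
  imports Defs
begin

text \<open>Two vertices joined by an edge carrying a hidden variable must lie in the same
  component of every admissible partition. Hence every admissible partition is coarser
  than the partition into classes of the equivalence generated by the hidden edges, and
  that partition is itself admissible. A partition of a finite set that is refined by
  another one has at most as many blocks, with equality only if the two coincide, so
  the classes of hidden connectivity form the unique admissible partition of maximal
  cardinality.\<close>

lemma refines_obtains_inj:
  assumes "refines A P Q"
  obtains h where "inj_on h Q" "h ` Q \<subseteq> P" "\<And>Y. Y \<in> Q \<Longrightarrow> h Y \<subseteq> Y"
proof -
  have pP: "partition_on A P" and pQ: "partition_on A Q"
    using assms by (auto simp: refines_def)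
  have "\<exists>X\<in>P. X \<subseteq> Y" if "Y \<in> Q" for Y
  proof -
    have "Y \<noteq> {}" using partition_onD3[OF pQ] that by blast
    then show ?thesis
      using refines_obtains_subset[OF assms that] partition_onD1 by fastforce
  qed
  then obtain h where h: "\<And>Y. Y \<in> Q \<Longrightarrow> h Y \<in> P \<and> h Y \<subseteq> Y"
    by metis
  have "inj_on h Q"
  proof (rule inj_onI)
    fix Y Y' assume Y: "Y \<in> Q" "Y' \<in> Q" "h Y = h Y'"
    have "h Y \<noteq> {}" using h[OF Y(1)] partition_onD3[OF pP] by metis
    moreover have "h Y \<subseteq> Y \<inter> Y'" using h[OF Y(1)] h[OF Y(2)] Y(3) by blast
    ultimately show "Y = Y'"
      using disjointD[OF partition_onD2[OF pQ] Y(1,2)] by blast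
  qed
  then show ?thesis using that h by blast
qed

lemma refines_card_le:
  assumes "finite P" "refines A P Q"
  shows "card Q \<le> card P"
  using refines_obtains_inj[OF assms(2)] card_inj_on_le[OF _ _ assms(1)] by metis

lemma refines_card_eq_imp_eq:
  assumes fin: "finite P" and ref: "refines A P Q" and card: "card Q = card P"
  shows "Q = P"
proof -
  obtain h where inj: "inj_on h Q" and hQ: "h ` Q \<subseteq> P" and hsub: "\<And>Y. Y \<in> Q \<Longrightarrow> h Y \<subseteq> Y"
    using refines_obtains_inj[OF ref] by metis
  have pP: "partition_on A P" and pQ: "partition_on A Q"
    using ref by (auto simp: refines_def)
  have hP: "h ` Q = P"
    using card_subset_eq[OF fin hQ] card card_image[OF inj] by simp
  have "Y = h Y" if Y: "Y \<in> Q" for Y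
  proof -
    have "{X \<in> P. X \<subseteq> Y} \<subseteq> {h Y}"
    proof clarify
      fix X assume "X \<in> P" "X \<subseteq> Y"
      then obtain Y' where Y': "Y' \<in> Q" "X = h Y'" using hP by blast
      have "X \<noteq> {}" using \<open>X \<in> P\<close> partition_onD3[OF pP] by blast
      then have "Y' = Y"
        using Y Y' hsub[OF Y'(1)] \<open>X \<subseteq> Y\<close> partition_onD2[OF pQ]
        unfolding disjoint_def by blast
      then show "X = h Y" using Y' by simp
    qed
    then have "Y \<subseteq> h Y"
      using partition_onD1[OF refines_obtains_subset[OF ref Y]] by blast
    then show ?thesis using hsub[OF Y] by blast
  qed
  then have "Q \<subseteq> P" using hQ by blast
  then show ?thesis using card_subset_eq[OF fin] card by blast
qed

definition hidden_link :: "vtx set \<Rightarrow> (vtx \<Rightarrow> vtx \<Rightarrow> bool) \<Rightarrow> (vtx \<Rightarrow> bool) \<Rightarrow> vtx rel" where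
  "hidden_link V E hid = {(a, b). a \<in> V \<and> b \<in> V \<and> E a b \<and> hid a}"

definition hidden_connected :: "vtx set \<Rightarrow> (vtx \<Rightarrow> vtx \<Rightarrow> bool) \<Rightarrow> (vtx \<Rightarrow> bool) \<Rightarrow> vtx rel" where
  "hidden_connected V E hid = Restr ((hidden_link V E hid \<union> (hidden_link V E hid)\<inverse>)\<^sup>*) V"

lemma equiv_hidden_connected: "equiv V (hidden_connected V E hid)"
proof (rule equivI)
  let ?S = "hidden_link V E hid \<union> (hidden_link V E hid)\<inverse>"
  have "sym (?S\<^sup>*)" by (rule sym_rtrancl) (auto simp: sym_def)
  then show "sym (hidden_connected V E hid)"
    unfolding hidden_connected_def sym_def by blast
  show "trans (hidden_connected V E hid)"
    unfolding hidden_connected_def trans_def by auto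
qed (auto simp: hidden_connected_def refl_on_def)

lemma admissible_partition_hidden_connected:
  "admissible_partition V E hid (V // hidden_connected V E hid)"
  unfolding admissible_partition_def
proof (intro conjI allI impI)
  let ?R = "hidden_connected V E hid"
  have eq: "equiv V ?R" by (rule equiv_hidden_connected)
  show "partition_on V (V // ?R)" using eq by (rule partition_on_quotient)
  fix a b X Y
  assume e: "E a b" and X: "X \<in> V // ?R" and Y: "Y \<in> V // ?R"
    and a: "a \<in> X" and b: "b \<in> Y" and ne: "X \<noteq> Y"
  show "\<not> hid a"
  proof
    assume "hid a"
    moreover have "a \<in> V" "b \<in> V"
      using X Y a b in_quotient_imp_subset[OF eq] by blast+
    ultimately have "(a, b) \<in> ?R"
      using e by (auto simp: hidden_connected_def hidden_link_def)
    then have "b \<in> X" using in_quotient_imp_closed[OF eq X a] by blast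
    then show False using quotient_disj[OF eq X Y] b ne by blast
  qed
qed

lemma admissible_partition_block_closed:
  assumes adm: "admissible_partition V E hid Q" and Y: "Y \<in> Q" "a \<in> Y"
    and ab: "(a, b) \<in> hidden_connected V E hid"
  shows "b \<in> Y"
proof -
  have pQ: "partition_on V Q"
    and cut: "\<And>a b S T. E a b \<Longrightarrow> S \<in> Q \<Longrightarrow> T \<in> Q \<Longrightarrow> a \<in> S \<Longrightarrow> b \<in> T \<Longrightarrow> S \<noteq> T \<Longrightarrow> \<not> hid a"
    using adm unfolding admissible_partition_def by blast+
  have "(a, b) \<in> (hidden_link V E hid \<union> (hidden_link V E hid)\<inverse>)\<^sup>*"
    using ab by (simp add: hidden_connected_def)
  then show ?thesis
  proof (induction rule: rtrancl_induct)
    case base then show ?case using Y by simp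
  next
    case (step b c)
    have "c \<in> V" using step(2) by (auto simp: hidden_link_def)
    then obtain T where T: "T \<in> Q" "c \<in> T" using partition_onD1[OF pQ] by blast
    from step(2) have "E b c \<and> hid b \<or> E c b \<and> hid c"
      by (auto simp: hidden_link_def)
    then have "T = Y"
      using cut[OF _ Y(1) T(1) step(3) T(2)] cut[OF _ T(1) Y(1) T(2) step(3)] by blast
    then show ?case using T by simp
  qed
qed

lemma hidden_connected_refines_admissible_partition:
  assumes adm: "admissible_partition V E hid Q"
  shows "refines V (V // hidden_connected V E hid) Q"
  unfolding refines_def
proof (intro conjI ballI)
  let ?R = "hidden_connected V E hid"
  show "partition_on V (V // ?R)"
    using equiv_hidden_connected by (rule partition_on_quotient)
  show pQ: "partition_on V Q" using adm by (simp add: admissible_partition_def)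
  fix X assume "X \<in> V // ?R"
  then obtain x where x: "x \<in> V" "X = ?R `` {x}" by (auto elim: quotientE)
  then obtain Y where Y: "Y \<in> Q" "x \<in> Y" using partition_onD1[OF pQ] by blast
  then have "X \<subseteq> Y" using admissible_partition_block_closed[OF adm Y] x(2) by blast
  then show "\<exists>Y\<in>Q. X \<subseteq> Y" using Y by blast
qed

lemma max_admissible_partition_iff:
  assumes "finite V"
  shows "max_admissible_partition V E hid P \<longleftrightarrow> P = V // hidden_connected V E hid"
proof -
  let ?P0 = "V // hidden_connected V E hid"
  have fin: "finite ?P0"
    using finite_elements[OF assms partition_on_quotient[OF equiv_hidden_connected]] .
  have "card Q \<le> card ?P0" and "card Q = card ?P0 \<Longrightarrow> Q = ?P0"
    if "admissible_partition V E hid Q" for Q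
    using hidden_connected_refines_admissible_partition[OF that]
      refines_card_le[OF fin] refines_card_eq_imp_eq[OF fin] by blast+
  then show ?thesis
    using admissible_partition_hidden_connected unfolding max_admissible_partition_def
    by (meson le_antisym)
qed

theorem lemma2:
  fixes A Ahat B Abar Atilde Bbar C Cbar D :: "real mat" and m n l p :: nat
  assumes "A \<in> carrier_mat n n" and "Ahat \<in> carrier_mat n l" and "B \<in> carrier_mat n m"
    and "Abar \<in> carrier_mat l n" and "Atilde \<in> carrier_mat l l" and "Bbar \<in> carrier_mat l m"
    and "C \<in> carrier_mat p n" and "Cbar \<in> carrier_mat p l" and "D \<in> carrier_mat p m"
    and "invertible_mat (1\<^sub>m l - Atilde)"
  shows "\<exists>!P. max_admissible_partition (ccs_vertices m n l p)
                (ccs_edge A Ahat B Abar Atilde Bbar C Cbar D) (hidden_var C Cbar D) P"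
proof -
  have "finite (ccs_vertices m n l p)" by (simp add: ccs_vertices_def)
  then show ?thesis by (simp add: max_admissible_partition_iff)
qed

end
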